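(* For every natural number $n\geq 2$, the $n$-Split Interval $S_n(I)$ is a Rosenthal compactum which is premetric of degree at most $n$ but is not premetric of degree at most $n-1$.
   Context: A Rosenthal compactum is a topological space homeomorphic to a compact subset of $\mathcal{B}_1(\mathbb{N}^{\mathbb{N}})$, the space of first Baire class real functions on $\mathbb{N}^{\mathbb{N}}$ with the pointwise topology. A compact space $K$ is premetric of degree at most $m$ if there is a continuous surjection $f:K\to M$ onto a metrizable compact space $M$ with $|f^{-1}(x)|\leq m$ for all $x\in M$. Let $I=[0,1]$. For $n\geq 2$, $S_n(I)$ is the set $I\times\{0,\ldots,n-1\}$ with the topology in which the points $(x,i)$ with $i\in\{2,\ldots,n-1\}$ are isolated, a point $(x,0)$ with $x>0$ has basic neighbourhoods $\{(x,0)\}\cup\{(y,i): z_0<y<x,\ i\in\{0,\ldots,n-1\}\}$ for $z_0\in I$, $z_0<x$, a point $(x,1)$ with $x<1$ has basic neighbourhoods $\{(x,1)\}\cup\{(y,i): x<y<z_1,\ i\in\{0,\ldots,n-1\}\}$ for $z_1\in I$, $z_1>x$, and the points $(0,0)$ and $(1,1)$ are isolated. *)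

theory Defs
  imports "HOL-Analysis.Analysis"
begin

definition baire_space :: "(nat \<Rightarrow> nat) topology" where
  "baire_space = product_topology (\<lambda>_. discrete_topology (UNIV :: nat set)) UNIV"

definition baire_one :: "((nat \<Rightarrow> nat) \<Rightarrow> real) set" where
  "baire_one = {f. \<exists>g :: nat \<Rightarrow> (nat \<Rightarrow> nat) \<Rightarrow> real.
      (\<forall>k. continuous_map baire_space euclideanreal (g k)) \<and>
      (\<forall>x. (\<lambda>k. g k x) \<longlonglongrightarrow> f x)}"

definition pointwise_top :: "((nat \<Rightarrow> nat) \<Rightarrow> real) topology" where
  "pointwise_top = product_topology (\<lambda>_. euclideanreal) UNIV"

definition rosenthal_compactum :: "'a topology \<Rightarrow> bool" where
  "rosenthal_compactum X \<longleftrightarrow>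
     (\<exists>K. K \<subseteq> baire_one \<and> compactin pointwise_top K \<and>
          X homeomorphic_space subtopology pointwise_top K)"

definition premetric_degree_le :: "'a topology \<Rightarrow> nat \<Rightarrow> 'b itself \<Rightarrow> bool" where
  "premetric_degree_le K m (_ :: 'b itself) \<longleftrightarrow>
     (\<exists>(M :: 'b topology) f.
        metrizable_space M \<and> compact_space M \<and>
        continuous_map K M f \<and> f ` topspace K = topspace M \<and>
        (\<forall>y \<in> topspace M. finite {x \<in> topspace K. f x = y} \<and>
                           card {x \<in> topspace K. f x = y} \<le> m))"

definition split_carrier :: "nat \<Rightarrow> (real \<times> nat) set" where
  "split_carrier n = {0..1} \<times> {0..<n}"

definition split_nbhds :: "nat \<Rightarrow> real \<times> nat \<Rightarrow> (real \<times> nat) set set" where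
  "split_nbhds n p =
     (case p of (x, i) \<Rightarrow>
        if i = 0 \<and> x > 0 then
          {{(x, 0)} \<union> {(y, j). z0 < y \<and> y < x \<and> j < n} | z0. z0 \<in> {0..1} \<and> z0 < x}
        else if i = 1 \<and> x < 1 then
          {{(x, 1)} \<union> {(y, j). x < y \<and> y < z1 \<and> j < n} | z1. z1 \<in> {0..1} \<and> z1 > x}
        else {{(x, i)}})"

definition split_interval :: "nat \<Rightarrow> (real \<times> nat) topology" where
  "split_interval n = topology (\<lambda>U. U \<subseteq> split_carrier n \<and>
       (\<forall>p \<in> U. \<exists>B \<in> split_nbhds n p. B \<subseteq> U))"

end

theory Submission
  imports Defs
begin

text \<open>
  The projection \<open>fst\<close> of \<open>S\<^sub>n(I)\<close> onto \<open>[0, 1]\<close> is continuous with fibres of size \<open>n\<close>. It is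
  also the key to compactness: the finitely many members of an open cover that cover the fibre
  over \<open>x\<close> contain a left neighbourhood of \<open>(x, 0)\<close> and a right neighbourhood of \<open>(x, 1)\<close>,
  hence the whole preimage of an open interval around \<open>x\<close>; compactness of \<open>[0, 1]\<close> does the rest.

  Suppose \<open>f\<close> maps \<open>S\<^sub>n(I)\<close> continuously into a metric space with fibres of fewer than \<open>n\<close>
  points. Then \<open>f\<close> separates two points of every column \<open>{y} \<times> {0..<n}\<close>, and since \<open>[0, 1]\<close>
  is uncountable there are levels \<open>a, b\<close> and \<open>\<epsilon> > 0\<close> with \<open>d (f (y, a)) (f (y, b)) > \<epsilon>\<close> for
  infinitely many \<open>y\<close>. These \<open>y\<close> accumulate from one side at some \<open>x\<close>, so every neighbourhood of
  \<open>(x, 0)\<close> or of \<open>(x, 1)\<close> contains whole columns over them, contradicting continuity of \<open>f\<close>.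

  For the Rosenthal property, let \<open>h : \<nat>\<^sup>\<nat> \<rightarrow> [0, 1]\<close> be the continuous surjection given by
  binary expansions and send \<open>(x, i)\<close> to \<open>s \<mapsto> [h s < x] + i [h s = x]\<close>. Each such function is a
  pointwise limit of continuous ones, the map is continuous and injective, and a continuous
  injection of a compact space into the Hausdorff space of pointwise convergence is an embedding.
\<close>

section \<open>Neighbourhoods and open sets of the split interval\<close>

lemma istopology_neighbourhood_base:
  assumes "\<And>p B1 B2. B1 \<in> N p \<Longrightarrow> B2 \<in> N p \<Longrightarrow> \<exists>B\<in>N p. B \<subseteq> B1 \<inter> B2"
  shows "istopology (\<lambda>U. U \<subseteq> C \<and> (\<forall>p\<in>U. \<exists>B\<in>N p. B \<subseteq> U))"
  unfolding istopology_def
proof (rule conjI; intro allI impI)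
  fix S T assume S: "S \<subseteq> C \<and> (\<forall>p\<in>S. \<exists>B\<in>N p. B \<subseteq> S)"
    and T: "T \<subseteq> C \<and> (\<forall>p\<in>T. \<exists>B\<in>N p. B \<subseteq> T)"
  have "\<exists>B\<in>N p. B \<subseteq> S \<inter> T" if p: "p \<in> S \<inter> T" for p
  proof -
    obtain B1 where "B1 \<in> N p" "B1 \<subseteq> S" using S p by auto
    moreover obtain B2 where "B2 \<in> N p" "B2 \<subseteq> T" using T p by auto
    ultimately show ?thesis using assms by (meson le_inf_iff subset_trans)
  qed
  with S show "S \<inter> T \<subseteq> C \<and> (\<forall>p\<in>S \<inter> T. \<exists>B\<in>N p. B \<subseteq> S \<inter> T)" by blast
next
  fix \<K> assume "\<forall>K\<in>\<K>. K \<subseteq> C \<and> (\<forall>p\<in>K. \<exists>B\<in>N p. B \<subseteq> K)"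
  then show "\<Union>\<K> \<subseteq> C \<and> (\<forall>p\<in>\<Union>\<K>. \<exists>B\<in>N p. B \<subseteq> \<Union>\<K>)"
    by (metis (no_types, lifting) Union_iff Union_least Union_upper subset_trans)
qed

definition split_left_nbhd :: "nat \<Rightarrow> real \<Rightarrow> real \<Rightarrow> (real \<times> nat) set" where
  "split_left_nbhd n x z = {(x, 0)} \<union> {(y, j). z < y \<and> y < x \<and> j < n}"

definition split_right_nbhd :: "nat \<Rightarrow> real \<Rightarrow> real \<Rightarrow> (real \<times> nat) set" where
  "split_right_nbhd n x z = {(x, 1)} \<union> {(y, j). x < y \<and> y < z \<and> j < n}"

lemma mem_split_carrier [simp]: "(x, i) \<in> split_carrier n \<longleftrightarrow> 0 \<le> x \<and> x \<le> 1 \<and> i < n"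
  by (auto simp: split_carrier_def)

lemma split_nbhds_eq:
  "split_nbhds n (x, i) =
     (if i = 0 \<and> x > 0 then {split_left_nbhd n x z | z. z \<in> {0..1} \<and> z < x}
      else if i = 1 \<and> x < 1 then {split_right_nbhd n x z | z. z \<in> {0..1} \<and> x < z}
      else {{(x, i)}})"
  unfolding split_nbhds_def split_left_nbhd_def split_right_nbhd_def by simp

lemma split_nbhds_cases:
  obtains (left) "i = 0" "0 < x" "split_nbhds n (x, i) = {split_left_nbhd n x z | z. z \<in> {0..1} \<and> z < x}"
  | (right) "i = 1" "x < 1" "split_nbhds n (x, i) = {split_right_nbhd n x z | z. z \<in> {0..1} \<and> x < z}"
  | (isolated) "split_nbhds n (x, i) = {{(x, i)}}"
proof (cases "i = 0 \<and> 0 < x")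
  case True
  then show thesis
    by (intro left) (simp_all add: split_nbhds_eq)
next
  case not_left: False
  show thesis
  proof (cases "i = 1 \<and> x < 1")
    case True
    with not_left show thesis
      by (intro right) (simp_all add: split_nbhds_eq)
  next
    case False
    with not_left show thesis
      by (intro isolated) (simp only: split_nbhds_eq if_False if_not_P)
  qed
qed

lemma split_nbhds_nonempty: "\<exists>B. B \<in> split_nbhds n p"
proof -
  obtain x i where p: "p = (x, i)" by fastforce
  show ?thesis
  proof (cases rule: split_nbhds_cases[of i x n])
    case left
    then have "split_left_nbhd n x 0 \<in> split_nbhds n p" by (auto simp: p)
    then show ?thesis ..
  next
    case right
    then have "split_right_nbhd n x 1 \<in> split_nbhds n p" by (auto simp: p)
    then show ?thesis ..
  next
    case isolated
    then show ?thesis by (simp add: p)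
  qed
qed

lemma split_nbhds_subset_carrier:
  assumes "p \<in> split_carrier n" "B \<in> split_nbhds n p"
  shows "B \<subseteq> split_carrier n"
proof -
  obtain x i where p: "p = (x, i)" by fastforce
  show ?thesis
  proof (cases rule: split_nbhds_cases[of i x n])
    case left
    with assms obtain z where "B = split_left_nbhd n x z" "z \<in> {0..1}" by (auto simp: p)
    with assms show ?thesis by (auto simp: p split_left_nbhd_def)
  next
    case right
    with assms obtain z where "B = split_right_nbhd n x z" "z \<in> {0..1}" by (auto simp: p)
    with assms right show ?thesis by (auto simp: p split_right_nbhd_def)
  next
    case isolated
    with assms show ?thesis by (simp add: p)
  qed
qed

lemma split_left_nbhd_mono: "z \<le> z' \<Longrightarrow> split_left_nbhd n x z' \<subseteq> split_left_nbhd n x z"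
  by (auto simp: split_left_nbhd_def)

lemma split_right_nbhd_mono: "z' \<le> z \<Longrightarrow> split_right_nbhd n x z' \<subseteq> split_right_nbhd n x z"
  by (auto simp: split_right_nbhd_def)

lemma split_nbhds_directed:
  assumes "B1 \<in> split_nbhds n p" "B2 \<in> split_nbhds n p"
  shows "\<exists>B\<in>split_nbhds n p. B \<subseteq> B1 \<inter> B2"
proof -
  obtain x i where p: "p = (x, i)" by fastforce
  show ?thesis
  proof (cases rule: split_nbhds_cases[of i x n])
    case left
    then obtain z1 z2 where z: "B1 = split_left_nbhd n x z1" "B2 = split_left_nbhd n x z2"
      "z1 \<in> {0..1}" "z1 < x" "z2 \<in> {0..1}" "z2 < x"
      using assms by (auto simp: p)
    then have "split_left_nbhd n x (max z1 z2) \<in> split_nbhds n p"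
      using left by (auto simp: p max_def)
    moreover have "split_left_nbhd n x (max z1 z2) \<subseteq> B1 \<inter> B2"
      using z split_left_nbhd_mono[of _ "max z1 z2"] by simp
    ultimately show ?thesis by blast
  next
    case right
    then obtain z1 z2 where z: "B1 = split_right_nbhd n x z1" "B2 = split_right_nbhd n x z2"
      "z1 \<in> {0..1}" "x < z1" "z2 \<in> {0..1}" "x < z2"
      using assms by (auto simp: p)
    then have "split_right_nbhd n x (min z1 z2) \<in> split_nbhds n p"
      using right by (auto simp: p min_def)
    moreover have "split_right_nbhd n x (min z1 z2) \<subseteq> B1 \<inter> B2"
      using z split_right_nbhd_mono[of "min z1 z2"] by simp
    ultimately show ?thesis by blast
  next
    case isolated
    with assms show ?thesis by (simp add: p)
  qed
qed

lemma openin_split_interval: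
  "openin (split_interval n) U \<longleftrightarrow> U \<subseteq> split_carrier n \<and> (\<forall>p\<in>U. \<exists>B\<in>split_nbhds n p. B \<subseteq> U)"
proof -
  have "istopology (\<lambda>U. U \<subseteq> split_carrier n \<and> (\<forall>p\<in>U. \<exists>B\<in>split_nbhds n p. B \<subseteq> U))"
    by (rule istopology_neighbourhood_base) (rule split_nbhds_directed)
  then show ?thesis
    by (simp add: split_interval_def)
qed

lemma topspace_split_interval [simp]: "topspace (split_interval n) = split_carrier n"
proof (rule subset_antisym)
  show "topspace (split_interval n) \<subseteq> split_carrier n"
    using openin_topspace[of "split_interval n"] by (simp only: openin_split_interval)
  have "\<exists>B\<in>split_nbhds n p. B \<subseteq> split_carrier n" if "p \<in> split_carrier n" for p
    using split_nbhds_nonempty[of n p] split_nbhds_subset_carrier[OF that] by blast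
  then have "openin (split_interval n) (split_carrier n)"
    by (simp add: openin_split_interval)
  then show "split_carrier n \<subseteq> topspace (split_interval n)"
    by (rule openin_subset)
qed

lemma openin_split_interval_left:
  assumes "openin (split_interval n) U" "(x, 0) \<in> U"
  obtains z where "z < x" "\<And>y j. z < y \<Longrightarrow> y < x \<Longrightarrow> 0 \<le> y \<Longrightarrow> j < n \<Longrightarrow> (y, j) \<in> U"
proof (cases "0 < x")
  case True
  obtain B where "B \<in> split_nbhds n (x, 0)" "B \<subseteq> U"
    using assms by (auto simp: openin_split_interval)
  with True obtain z where "z < x" "split_left_nbhd n x z \<subseteq> U"
    by (auto simp: split_nbhds_eq)
  then show thesis
    using that by (auto simp: split_left_nbhd_def)
next
  case False
  then show thesis
    using that[of "x - 1"] by auto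
qed

lemma openin_split_interval_right:
  assumes "openin (split_interval n) U" "(x, 1) \<in> U"
  obtains z where "x < z" "\<And>y j. x < y \<Longrightarrow> y < z \<Longrightarrow> y \<le> 1 \<Longrightarrow> j < n \<Longrightarrow> (y, j) \<in> U"
proof (cases "x < 1")
  case True
  obtain B where "B \<in> split_nbhds n (x, 1)" "B \<subseteq> U"
    using assms by (auto simp: openin_split_interval)
  with True obtain z where "x < z" "split_right_nbhd n x z \<subseteq> U"
    by (auto simp: split_nbhds_eq)
  then show thesis
    using that by (auto simp: split_right_nbhd_def)
next
  case False
  then show thesis
    using that[of "x + 1"] by auto
qed

lemma split_nbhd_inside:
  assumes "(x, i) \<in> split_carrier n" "a < x" "x < b"
  shows "\<exists>B\<in>split_nbhds n (x, i). \<forall>q\<in>B. q = (x, i) \<or>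
           (i = 0 \<and> a < fst q \<and> fst q < x \<or> i = 1 \<and> x < fst q \<and> fst q < b)"
proof (cases rule: split_nbhds_cases[of i x n])
  case left
  with assms have "split_left_nbhd n x (max 0 a) \<in> split_nbhds n (x, i)"
    by auto
  moreover have "\<forall>q\<in>split_left_nbhd n x (max 0 a). q = (x, i) \<or> i = 0 \<and> a < fst q \<and> fst q < x"
    using left by (auto simp: split_left_nbhd_def)
  ultimately show ?thesis by blast
next
  case right
  with assms have "split_right_nbhd n x (min 1 b) \<in> split_nbhds n (x, i)"
    by auto
  moreover have "\<forall>q\<in>split_right_nbhd n x (min 1 b). q = (x, i) \<or> i = 1 \<and> x < fst q \<and> fst q < b"
    using right by (auto simp: split_right_nbhd_def)
  ultimately show ?thesis by blast
next
  case isolated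
  then show ?thesis by simp
qed

lemma continuous_map_split_intervalI:
  assumes "g ` split_carrier n \<subseteq> topspace Y"
    and "\<And>p V. p \<in> split_carrier n \<Longrightarrow> openin Y V \<Longrightarrow> g p \<in> V \<Longrightarrow>
                \<exists>B\<in>split_nbhds n p. g ` B \<subseteq> V"
  shows "continuous_map (split_interval n) Y g"
  unfolding continuous_map
proof (intro conjI allI impI)
  fix V assume V: "openin Y V"
  have "\<exists>B\<in>split_nbhds n p. B \<subseteq> {p \<in> split_carrier n. g p \<in> V}"
    if p: "p \<in> split_carrier n" "g p \<in> V" for p
  proof -
    obtain B where B: "B \<in> split_nbhds n p" "g ` B \<subseteq> V"
      using assms(2) V p by blast
    have "B \<subseteq> split_carrier n"
      using split_nbhds_subset_carrier p(1) B(1) .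
    with B(2) have "B \<subseteq> {p \<in> split_carrier n. g p \<in> V}"
      by auto
    with B(1) show ?thesis by blast
  qed
  then show "openin (split_interval n) {p \<in> topspace (split_interval n). g p \<in> V}"
    by (auto simp: openin_split_interval)
qed (use assms(1) in auto)

section \<open>Compactness and the projection onto the interval\<close>

lemma continuous_map_fst_split_interval: "continuous_map (split_interval n) euclideanreal fst"
proof (rule continuous_map_split_intervalI)
  fix p V assume p: "p \<in> split_carrier n" and V: "openin euclideanreal V" "fst p \<in> V"
  obtain x i where p_eq: "p = (x, i)" by fastforce
  obtain e where e: "e > 0" "ball x e \<subseteq> V"
    using V by (auto simp: p_eq open_contains_ball)
  obtain B where B: "B \<in> split_nbhds n p"
    and B_inside: "\<forall>q\<in>B. q = p \<or> (i = 0 \<and> x - e < fst q \<and> fst q < x \<or> i = 1 \<and> x < fst q \<and> fst q < x + e)"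
    using split_nbhd_inside[of x i n "x - e" "x + e"] p e(1) by (auto simp: p_eq)
  have "fst ` B \<subseteq> ball x e"
  proof
    fix t assume "t \<in> fst ` B"
    with B_inside e(1) show "t \<in> ball x e"
      by (auto simp: p_eq dist_real_def split: if_splits)
  qed
  with B e(2) show "\<exists>B\<in>split_nbhds n p. fst ` B \<subseteq> V" by blast
qed simp

lemma split_interval_cover_near_fibre:
  assumes "n \<ge> 2" "x \<in> {0..1}"
    and opens: "\<forall>U\<in>\<U>. openin (split_interval n) U" and cover: "split_carrier n \<subseteq> \<Union>\<U>"
  shows "\<exists>V \<F>. open V \<and> x \<in> V \<and> finite \<F> \<and> \<F> \<subseteq> \<U> \<and>
           {p \<in> split_carrier n. fst p \<in> V} \<subseteq> \<Union>\<F>"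
proof -
  have "\<forall>i<n. \<exists>U\<in>\<U>. (x, i) \<in> U"
    using cover assms(2) by (auto simp: subset_iff)
  then obtain U where U: "\<And>i. i < n \<Longrightarrow> U i \<in> \<U> \<and> (x, i) \<in> U i"
    by metis
  obtain a where a: "a < x" "\<And>y j. a < y \<Longrightarrow> y < x \<Longrightarrow> 0 \<le> y \<Longrightarrow> j < n \<Longrightarrow> (y, j) \<in> U 0"
    using openin_split_interval_left[of n "U 0" x] U[of 0] opens assms(1) by auto
  obtain b where b: "x < b" "\<And>y j. x < y \<Longrightarrow> y < b \<Longrightarrow> y \<le> 1 \<Longrightarrow> j < n \<Longrightarrow> (y, j) \<in> U 1"
    using openin_split_interval_right[of n "U 1" x] U[of 1] opens assms(1) by auto
  have "{p \<in> split_carrier n. fst p \<in> {a<..<b}} \<subseteq> \<Union>(U ` {..<n})"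
  proof clarify
    fix y j assume p: "(y, j) \<in> split_carrier n" "fst (y, j) \<in> {a<..<b}"
    consider "y < x" | "y = x" | "x < y" by linarith
    then show "(y, j) \<in> \<Union>(U ` {..<n})"
    proof cases
      case 1
      then show ?thesis using a p assms(1) by force
    next
      case 2
      then show ?thesis using U p by force
    next
      case 3
      then show ?thesis using b p assms(1) by force
    qed
  qed
  moreover have "open {a<..<b}" "x \<in> {a<..<b}" "finite (U ` {..<n})" "U ` {..<n} \<subseteq> \<U>"
    using a b U by auto
  ultimately show ?thesis by blast
qed

lemma compact_space_split_interval:
  assumes "n \<ge> 2"
  shows "compact_space (split_interval n)"
  unfolding compact_space_alt topspace_split_interval
proof (intro allI impI, elim conjE)
  fix \<U> assume opens: "\<forall>U\<in>\<U>. openin (split_interval n) U" and cover: "split_carrier n \<subseteq> \<Union>\<U>"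
  define good where "good V \<F> \<longleftrightarrow> open V \<and> finite \<F> \<and> \<F> \<subseteq> \<U> \<and>
      {p \<in> split_carrier n. fst p \<in> V} \<subseteq> \<Union>\<F>" for V \<F>
  have "\<exists>V \<F>. x \<in> V \<and> good V \<F>" if "x \<in> {0..1}" for x
    using split_interval_cover_near_fibre[OF assms that opens cover] by (auto simp: good_def)
  then obtain V \<F> where VF: "\<And>x. x \<in> {0..1} \<Longrightarrow> x \<in> V x \<and> good (V x) (\<F> x)"
    by metis
  have "\<And>x. x \<in> {0..1} \<Longrightarrow> open (V x)" "{0..1} \<subseteq> (\<Union>x\<in>{0..1}. V x)"
    using VF by (auto simp: good_def)
  then obtain D where D: "D \<subseteq> {0..1}" "finite D" "{0..1} \<subseteq> (\<Union>x\<in>D. V x)"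
    by (rule compactE_image[OF compact_Icc])
  have "split_carrier n \<subseteq> \<Union>(\<Union>x\<in>D. \<F> x)"
  proof
    fix p assume p: "p \<in> split_carrier n"
    then have "fst p \<in> {0..1}" by (auto simp: split_carrier_def)
    then obtain x where x: "x \<in> D" "fst p \<in> V x" using D(3) by blast
    with D(1) have "good (V x) (\<F> x)" using VF by blast
    then have "{p \<in> split_carrier n. fst p \<in> V x} \<subseteq> \<Union>(\<F> x)"
      by (simp add: good_def)
    with x p show "p \<in> \<Union>(\<Union>x\<in>D. \<F> x)" by blast
  qed
  moreover have "finite (\<Union>x\<in>D. \<F> x)" "(\<Union>x\<in>D. \<F> x) \<subseteq> \<U>"
    using VF D(1,2) by (auto simp: good_def subset_iff)
  ultimately show "\<exists>\<F>. finite \<F> \<and> \<F> \<subseteq> \<U> \<and> split_carrier n \<subseteq> \<Union>\<F>" by blast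
qed

lemma split_column_eq: "{p \<in> split_carrier n. fst p = x} = (\<lambda>i. (x, i)) ` {..<n}" if "x \<in> {0..1}"
  using that by (auto simp: split_carrier_def)

lemma card_split_column: "card ((\<lambda>i. (x, i)) ` {..<n}) = n"
  by (simp add: card_image inj_on_def)

lemma premetric_degree_split_interval:
  assumes "n \<ge> 1"
  shows "premetric_degree_le (split_interval n) n TYPE(real)"
  unfolding premetric_degree_le_def
proof (intro exI conjI)
  let ?I = "subtopology euclideanreal {0..1}"
  show "metrizable_space ?I"
    by (rule metrizable_space_subtopology[OF metrizable_space_euclidean])
  show "compact_space ?I"
    by (rule compact_space_subtopology) simp
  show "fst ` topspace (split_interval n) = topspace ?I"
    using assms by (auto simp: split_carrier_def image_iff intro: bexI[of _ "(_, 0)"])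
  then show "continuous_map (split_interval n) ?I fst"
    by (auto simp: continuous_map_in_subtopology continuous_map_fst_split_interval)
  show "\<forall>y\<in>topspace ?I. finite {p \<in> topspace (split_interval n). fst p = y} \<and>
                       card {p \<in> topspace (split_interval n). fst p = y} \<le> n"
    by (simp add: split_column_eq card_split_column)
qed

section \<open>No continuous map into a metric space has smaller fibres\<close>

lemma uncountable_pigeonhole:
  assumes "uncountable S" "countable I" "\<And>y. y \<in> S \<Longrightarrow> \<exists>i\<in>I. P i y"
  obtains i where "i \<in> I" "infinite {y \<in> S. P i y}"
proof (rule ccontr)
  assume "\<not> thesis"
  then have "\<forall>i\<in>I. finite {y \<in> S. P i y}"
    using that by blast
  with assms(2) have "countable (\<Union>i\<in>I. {y \<in> S. P i y})"
    by (blast intro: countable_finite)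
  moreover have "S \<subseteq> (\<Union>i\<in>I. {y \<in> S. P i y})"
    using assms(3) by blast
  ultimately show False
    using assms(1) countable_subset by blast
qed

lemma infinite_one_sided_accumulation:
  fixes T :: "real set"
  assumes "infinite T" "T \<subseteq> {0..1}"
  obtains x where "x \<in> {0..1}"
    "(0 < x \<and> (\<forall>z<x. \<exists>y\<in>T. z < y \<and> y < x)) \<or> (x < 1 \<and> (\<forall>z>x. \<exists>y\<in>T. x < y \<and> y < z))"
proof -
  obtain x where x: "x \<in> {0..1}" "x islimpt T"
    using compact_eq_Bolzano_Weierstrass[of "{0..1::real}"] assms by auto
  show thesis
  proof (cases "\<forall>z<x. \<exists>y\<in>T. z < y \<and> y < x")
    case True
    then have "\<exists>y\<in>T. x - 1 < y \<and> y < x" by simp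
    then obtain y where "y \<in> T" "y < x" by blast
    with assms(2) have "0 < x" by force
    with True x(1) that show thesis by blast
  next
    case False
    then obtain z where z: "z < x" "\<forall>y\<in>T. \<not> (z < y \<and> y < x)"
      by auto
    have right: "\<exists>y\<in>T. x < y \<and> y < w" if "x < w" for w
    proof -
      have "0 < min (w - x) (x - z)"
        using that z(1) by simp
      then obtain y where y: "y \<in> T" "y \<noteq> x" "dist y x < min (w - x) (x - z)"
        using x(2) unfolding islimpt_approachable by blast
      with z(2) have "x < y \<and> y < w"
        by (auto simp: dist_real_def abs_if split: if_splits)
      with y(1) show ?thesis by blast
    qed
    have "\<exists>y\<in>T. x < y \<and> y < x + 1" by (rule right) simp
    then obtain y where "y \<in> T" "x < y" by blast
    with assms(2) have "x < 1" by force
    with right x(1) that show thesis by blast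
  qed
qed

lemma split_interval_columns_accumulate:
  assumes "n \<ge> 2" "infinite T" "T \<subseteq> {0..1}"
  obtains p where "p \<in> split_carrier n"
    "\<And>U. openin (split_interval n) U \<Longrightarrow> p \<in> U \<Longrightarrow> \<exists>y\<in>T. \<forall>j<n. (y, j) \<in> U"
proof -
  obtain x where x: "x \<in> {0..1}"
    and accumulates: "(0 < x \<and> (\<forall>z<x. \<exists>y\<in>T. z < y \<and> y < x)) \<or>
                      (x < 1 \<and> (\<forall>z>x. \<exists>y\<in>T. x < y \<and> y < z))"
    using infinite_one_sided_accumulation[OF assms(2,3)] by blast
  from accumulates show thesis
  proof
    assume left: "0 < x \<and> (\<forall>z<x. \<exists>y\<in>T. z < y \<and> y < x)"
    have "\<exists>y\<in>T. \<forall>j<n. (y, j) \<in> U" if U: "openin (split_interval n) U" "(x, 0) \<in> U" for U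
    proof -
      obtain z where "z < x" and z: "\<And>y j. z < y \<Longrightarrow> y < x \<Longrightarrow> 0 \<le> y \<Longrightarrow> j < n \<Longrightarrow> (y, j) \<in> U"
        using openin_split_interval_left[OF U] by blast
      with left obtain y where "y \<in> T" "z < y" "y < x" by blast
      with z assms(3) show ?thesis by force
    qed
    moreover have "(x, 0) \<in> split_carrier n" using assms(1) x by simp
    ultimately show thesis using that by blast
  next
    assume right: "x < 1 \<and> (\<forall>z>x. \<exists>y\<in>T. x < y \<and> y < z)"
    have "\<exists>y\<in>T. \<forall>j<n. (y, j) \<in> U" if U: "openin (split_interval n) U" "(x, 1) \<in> U" for U
    proof -
      obtain z where "x < z" and z: "\<And>y j. x < y \<Longrightarrow> y < z \<Longrightarrow> y \<le> 1 \<Longrightarrow> j < n \<Longrightarrow> (y, j) \<in> U"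
        using openin_split_interval_right[OF U] by blast
      with right obtain y where "y \<in> T" "x < y" "y < z" by blast
      with z assms(3) show ?thesis by force
    qed
    moreover have "(x, 1) \<in> split_carrier n" using assms(1) x by simp
    ultimately show thesis using that by blast
  qed
qed

lemma (in Metric_space) continuous_map_split_interval_columns_close:
  assumes "continuous_map (split_interval n) mtopology f" "n \<ge> 2"
    and "infinite T" "T \<subseteq> {0..1}" "0 < e" "a < n" "b < n"
  shows "\<exists>y\<in>T. d (f (y, a)) (f (y, b)) < e"
proof -
  have f_in: "f p \<in> M" if "p \<in> split_carrier n" for p
    using continuous_map_image_subset_topspace[OF assms(1)] that by auto
  obtain p where p: "p \<in> split_carrier n"
    and columns: "\<And>U. openin (split_interval n) U \<Longrightarrow> p \<in> U \<Longrightarrow> \<exists>y\<in>T. \<forall>j<n. (y, j) \<in> U"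
    using split_interval_columns_accumulate[OF assms(2-4)] by blast
  let ?U = "{q \<in> topspace (split_interval n). f q \<in> mball (f p) (e / 2)}"
  have "openin (split_interval n) ?U"
    using openin_continuous_map_preimage[OF assms(1) openin_mball] .
  moreover have "p \<in> ?U"
    using p f_in assms(5) by simp
  ultimately have "\<exists>y\<in>T. \<forall>j<n. (y, j) \<in> ?U"
    by (rule columns)
  then obtain y where y: "y \<in> T" "(y, a) \<in> ?U" "(y, b) \<in> ?U"
    using assms(6,7) by blast
  then have "d (f p) (f (y, a)) < e / 2" "d (f p) (f (y, b)) < e / 2"
    by auto
  moreover have "d (f (y, a)) (f (y, b)) \<le> d (f (y, a)) (f p) + d (f p) (f (y, b))"
    using f_in p y by (intro triangle) auto
  ultimately have "d (f (y, a)) (f (y, b)) < e"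
    by (simp add: commute)
  with y(1) show ?thesis ..
qed

lemma not_premetric_degree_split_interval:
  assumes n: "n \<ge> 2"
  shows "\<not> premetric_degree_le (split_interval n) (n - 1) TYPE('b)"
proof
  assume "premetric_degree_le (split_interval n) (n - 1) TYPE('b)"
  then obtain M :: "'b topology" and f where
    "metrizable_space M" and cont: "continuous_map (split_interval n) M f"
    and fibres: "\<forall>y\<in>topspace M. finite {p \<in> split_carrier n. f p = y} \<and>
                                 card {p \<in> split_carrier n. f p = y} \<le> n - 1"
    unfolding premetric_degree_le_def topspace_split_interval by blast
  then obtain MM d where "Metric_space MM d" and M: "M = Metric_space.mtopology MM d"
    unfolding metrizable_space_def by blast
  interpret Metric_space MM d by fact
  have f_in: "f p \<in> MM" if "p \<in> split_carrier n" for p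
    using continuous_map_image_subset_topspace[OF cont] that M by auto
  have separated: "\<exists>a<n. \<exists>b<n. f (y, a) \<noteq> f (y, b)" if y: "y \<in> {0..1}" for y
  proof (rule ccontr)
    assume "\<not> (\<exists>a<n. \<exists>b<n. f (y, a) \<noteq> f (y, b))"
    then have column: "(\<lambda>i. (y, i)) ` {..<n} \<subseteq> {p \<in> split_carrier n. f p = f (y, 0)}"
      using y n by auto
    have "f (y, 0) \<in> topspace M"
      using f_in y n M by simp
    then have "finite {p \<in> split_carrier n. f p = f (y, 0)}"
      and "card {p \<in> split_carrier n. f p = f (y, 0)} \<le> n - 1"
      using fibres by blast+
    with column have "card ((\<lambda>i. (y, i)) ` {..<n}) \<le> n - 1"
      using card_mono order_trans by blast
    with n show False by (simp add: card_split_column)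
  qed
  define P where "P = (\<lambda>(a, b, k) y. a < n \<and> b < n \<and> 1 / real (Suc k) < d (f (y, a)) (f (y, b)))"
  have cover: "\<exists>abk\<in>UNIV. P abk y" if y: "y \<in> {0..1}" for y
  proof -
    obtain a b where ab: "a < n" "b < n" "f (y, a) \<noteq> f (y, b)"
      using separated[OF y] by blast
    then have "0 < d (f (y, a)) (f (y, b))"
      using f_in y by simp
    then obtain k where "inverse (real (Suc k)) < d (f (y, a)) (f (y, b))"
      using reals_Archimedean by blast
    with ab show ?thesis
      by (auto simp: P_def divide_inverse)
  qed
  obtain abk where "abk \<in> UNIV" "infinite {y \<in> {0..1}. P abk y}"
    by (rule uncountable_pigeonhole[of "{0..1::real}" UNIV P])
      (simp add: uncountable_closed_interval, simp, erule cover, blast)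
  moreover obtain a b k where abk: "abk = (a, b, k)"
    by (cases abk)
  ultimately have T: "infinite {y \<in> {0..1}. P abk y}" "{y \<in> {0..1}. P abk y} \<subseteq> {0..1}"
    and ab: "a < n" "b < n"
    by (auto simp: P_def)
  have "0 < 1 / real (Suc k)" by simp
  with cont obtain y where "y \<in> {0..1}" "P abk y" "d (f (y, a)) (f (y, b)) < 1 / real (Suc k)"
    using continuous_map_split_interval_columns_close[OF _ n T _ ab] M by blast
  then show False
    by (simp add: P_def abk)
qed

section \<open>Binary expansions as a map from the Baire space\<close>

definition binary_term :: "(nat \<Rightarrow> nat) \<Rightarrow> nat \<Rightarrow> real" where
  "binary_term s j = of_bool (s j \<noteq> 0) * (1/2) ^ Suc j"

definition binary_value :: "(nat \<Rightarrow> nat) \<Rightarrow> real" where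
  "binary_value s = (\<Sum>j. binary_term s j)"

lemma binary_term_nonneg: "0 \<le> binary_term s j"
  by (simp add: binary_term_def)

lemma binary_term_le: "binary_term s j \<le> (1/2) ^ Suc j"
  by (simp add: binary_term_def)

lemma summable_binary_term: "summable (binary_term s)"
proof (rule summable_comparison_test)
  show "\<exists>N. \<forall>j\<ge>N. norm (binary_term s j) \<le> (1/2) * (1/2) ^ j"
    using binary_term_nonneg binary_term_le by auto
  show "summable (\<lambda>j. (1/2::real) * (1/2) ^ j)"
    by (simp add: summable_mult summable_geometric)
qed

lemma binary_value_partial_sum_bounds:
  "(\<Sum>j<k. binary_term s j) \<le> binary_value s"
  "binary_value s \<le> (\<Sum>j<k. binary_term s j) + (1/2) ^ k"
proof -
  have split: "binary_value s = (\<Sum>j. binary_term s (j + k)) + (\<Sum>j<k. binary_term s j)"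
    unfolding binary_value_def by (rule suminf_split_initial_segment[OF summable_binary_term])
  have tail_summable: "summable (\<lambda>j. binary_term s (j + k))"
    by (rule summable_ignore_initial_segment[OF summable_binary_term])
  have "0 \<le> (\<Sum>j. binary_term s (j + k))"
    by (rule suminf_nonneg[OF tail_summable]) (simp add: binary_term_nonneg)
  then show "(\<Sum>j<k. binary_term s j) \<le> binary_value s"
    using split by simp
  have "(\<Sum>j. binary_term s (j + k)) \<le> (\<Sum>j. (1/2) ^ Suc k * (1/2) ^ j)"
  proof (rule suminf_le[OF _ tail_summable])
    show "binary_term s (j + k) \<le> (1/2) ^ Suc k * (1/2) ^ j" for j
      using binary_term_le[of s "j + k"] by (simp add: power_add mult.commute)
    show "summable (\<lambda>j. (1/2::real) ^ Suc k * (1/2) ^ j)"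
      by (simp add: summable_mult summable_geometric)
  qed
  also have "\<dots> = (1/2) ^ Suc k * (\<Sum>j. (1/2::real) ^ j)"
    by (rule suminf_mult[OF summable_geometric]) simp
  also have "\<dots> = (1/2) ^ k"
    using suminf_geometric[of "1/2::real"] by simp
  finally show "binary_value s \<le> (\<Sum>j<k. binary_term s j) + (1/2) ^ k"
    using split by simp
qed

lemma continuous_map_binary_partial_sum:
  "continuous_map baire_space euclideanreal (\<lambda>s. \<Sum>j<k. binary_term s j)"
proof (intro continuous_map_sum)
  fix j
  have "continuous_map baire_space (discrete_topology UNIV) (\<lambda>s. s j)"
    unfolding baire_space_def by (rule continuous_map_product_projection) simp
  then show "continuous_map baire_space euclideanreal (\<lambda>s. binary_term s j)"
    unfolding binary_term_def
    by (rule continuous_map_compose[of _ _ _ _ "\<lambda>m. of_bool (m \<noteq> 0) * (1/2) ^ Suc j", unfolded o_def])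
      simp
qed simp

lemma continuous_map_binary_value: "continuous_map baire_space euclideanreal binary_value"
proof -
  have "\<forall>\<^sub>F k in sequentially. \<forall>s\<in>topspace baire_space. dist (\<Sum>j<k. binary_term s j) (binary_value s) < e"
    if "0 < e" for e
  proof -
    have "\<forall>\<^sub>F k in sequentially. (1/2::real) ^ k < e"
      by (rule order_tendstoD(2)[OF LIMSEQ_realpow_zero that]) simp_all
    then show ?thesis
    proof (rule eventually_mono, intro ballI)
      fix k s assume "(1/2::real) ^ k < e"
      with binary_value_partial_sum_bounds[of s k]
      show "dist (\<Sum>j<k. binary_term s j) (binary_value s) < e"
        by (simp add: dist_real_def)
    qed
  qed
  then show ?thesis
    using Met_TC.continuous_map_uniform_limit_alt[where F = sequentially and X = baire_space
        and f = "\<lambda>k s. \<Sum>j<k. binary_term s j" and g = binary_value]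
    by (simp add: continuous_map_binary_partial_sum)
qed

fun greedy_approx :: "real \<Rightarrow> nat \<Rightarrow> real" where
  "greedy_approx x 0 = 0"
| "greedy_approx x (Suc k) =
     greedy_approx x k + of_bool (greedy_approx x k + (1/2) ^ Suc k \<le> x) * (1/2) ^ Suc k"

definition greedy_digits :: "real \<Rightarrow> nat \<Rightarrow> nat" where
  "greedy_digits x k = of_bool (greedy_approx x k + (1/2) ^ Suc k \<le> x)"

lemma binary_partial_sum_greedy_digits: "(\<Sum>j<k. binary_term (greedy_digits x) j) = greedy_approx x k"
  by (induction k) (simp_all add: binary_term_def greedy_digits_def)

lemma greedy_approx_bounds:
  assumes "x \<in> {0..1}"
  shows "x - (1/2) ^ k \<le> greedy_approx x k \<and> greedy_approx x k \<le> x"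
proof (induction k)
  case 0
  with assms show ?case by simp
next
  case (Suc k)
  have "(1/2::real) ^ k = 2 * (1/2) ^ Suc k" by simp
  show ?case
  proof (cases "greedy_approx x k + (1/2) ^ Suc k \<le> x")
    case True
    then have "greedy_approx x (Suc k) = greedy_approx x k + (1/2) ^ Suc k" by simp
    with Suc.IH True \<open>(1/2::real) ^ k = 2 * (1/2) ^ Suc k\<close> show ?thesis by linarith
  next
    case False
    then have "greedy_approx x (Suc k) = greedy_approx x k" by simp
    with Suc.IH False \<open>(1/2::real) ^ k = 2 * (1/2) ^ Suc k\<close> show ?thesis by linarith
  qed
qed

lemma binary_value_greedy_digits:
  assumes "x \<in> {0..1}"
  shows "binary_value (greedy_digits x) = x"
proof -
  have "(\<lambda>k. x - (1/2::real) ^ k) \<longlonglongrightarrow> x - 0"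
    by (intro tendsto_diff tendsto_const LIMSEQ_realpow_zero) auto
  then have lower: "(\<lambda>k. x - (1/2::real) ^ k) \<longlonglongrightarrow> x"
    by simp
  have "(\<lambda>k. greedy_approx x k) \<longlonglongrightarrow> x"
  proof (rule real_tendsto_sandwich[OF _ _ lower tendsto_const])
    show "\<forall>\<^sub>F k in sequentially. x - (1/2) ^ k \<le> greedy_approx x k"
      using greedy_approx_bounds[OF assms] by simp
    show "\<forall>\<^sub>F k in sequentially. greedy_approx x k \<le> x"
      using greedy_approx_bounds[OF assms] by simp
  qed
  moreover have "(\<lambda>k. greedy_approx x k) \<longlonglongrightarrow> binary_value (greedy_digits x)"
    using summable_LIMSEQ[OF summable_binary_term, of "greedy_digits x"]
    by (simp add: binary_value_def binary_partial_sum_greedy_digits)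
  ultimately show ?thesis
    using LIMSEQ_unique by blast
qed

section \<open>An embedding into the first Baire class\<close>

lemma baire_one_comp_pointwise_limit:
  assumes "continuous_map baire_space euclideanreal g"
    and "\<And>k. continuous_on UNIV (\<phi> k)" and "\<And>t. (\<lambda>k. \<phi> k t) \<longlonglongrightarrow> \<psi> t"
  shows "(\<lambda>s. \<psi> (g s)) \<in> baire_one"
  unfolding baire_one_def mem_Collect_eq
proof (intro exI conjI allI)
  show "continuous_map baire_space euclideanreal (\<lambda>s. \<phi> k (g s))" for k
    using continuous_map_compose[OF assms(1), of euclideanreal "\<phi> k"] assms(2)
    by (simp add: continuous_map_iff_continuous2 o_def)
  show "(\<lambda>k. \<phi> k (g s)) \<longlonglongrightarrow> \<psi> (g s)" for s
    by (rule assms(3))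
qed

definition ramp :: "nat \<Rightarrow> real \<Rightarrow> real" where
  "ramp k u = max 0 (min 1 (real k * u))"

lemma continuous_on_ramp: "continuous_on UNIV (ramp k)"
  unfolding ramp_def by (intro continuous_intros)

lemma ramp_limit: "(\<lambda>k. ramp k u) \<longlonglongrightarrow> of_bool (0 < u)"
proof (cases "0 < u")
  case True
  have "\<forall>\<^sub>F k in sequentially. ramp k u = 1"
  proof (rule eventually_sequentiallyI)
    fix k assume "nat \<lceil>1 / u\<rceil> \<le> k"
    then have "1 / u \<le> real k" by linarith
    with True have "1 \<le> real k * u"
      using mult_right_mono[of "1 / u" "real k" u] by simp
    then show "ramp k u = 1" by (simp add: ramp_def)
  qed
  with True show ?thesis by (simp add: tendsto_eventually)
next
  case False
  then have "ramp k u = 0" for k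
    using mult_nonneg_nonpos[of "real k" u] by (simp add: ramp_def)
  with False show ?thesis by simp
qed

definition split_step :: "real \<times> nat \<Rightarrow> real \<Rightarrow> real" where
  "split_step p t = of_bool (t < fst p) + real (snd p) * of_bool (t = fst p)"

lemma split_step_limit:
  "(\<lambda>k. ramp k (x - t) + real i * (1 - ramp k (x - t) - ramp k (t - x))) \<longlonglongrightarrow> split_step (x, i) t"
proof -
  have "(\<lambda>k. ramp k (x - t) + real i * (1 - ramp k (x - t) - ramp k (t - x))) \<longlonglongrightarrow>
          of_bool (0 < x - t) + real i * (1 - of_bool (0 < x - t) - of_bool (0 < t - x))"
    by (intro tendsto_intros ramp_limit)
  moreover have "of_bool (0 < x - t) + real i * (1 - of_bool (0 < x - t) - of_bool (0 < t - x)) =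
                 split_step (x, i) t"
  proof -
    consider "t < x" | "t = x" | "x < t" by linarith
    then show ?thesis by cases (simp_all add: split_step_def)
  qed
  ultimately show ?thesis by simp
qed

lemma split_step_binary_value_baire_one: "(\<lambda>s. split_step p (binary_value s)) \<in> baire_one"
proof -
  obtain x i where p: "p = (x, i)" by fastforce
  show ?thesis
    unfolding p
    by (rule baire_one_comp_pointwise_limit[OF continuous_map_binary_value _ split_step_limit])
      (intro continuous_intros continuous_on_compose2[OF continuous_on_ramp]; simp)
qed

lemma split_step_locally_constant:
  assumes "p \<in> split_carrier n"
  shows "\<exists>B\<in>split_nbhds n p. \<forall>q\<in>B. split_step q t = split_step p t"
proof -
  obtain x i where p: "p = (x, i)" by fastforce
  \<comment> \<open>small neighbourhoods of \<open>p\<close> stay on the side of \<open>t\<close> where \<open>x\<close> lies\<close>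
  define a where "a = (if t < x then t else x - 1)"
  define b where "b = (if x < t then t else x + 1)"
  have "a < x" "x < b"
    by (simp_all add: a_def b_def)
  with assms obtain B where "B \<in> split_nbhds n p"
    and B: "\<forall>q\<in>B. q = p \<or> (i = 0 \<and> a < fst q \<and> fst q < x \<or> i = 1 \<and> x < fst q \<and> fst q < b)"
    using split_nbhd_inside[of x i n a b] by (auto simp: p)
  moreover have "split_step q t = split_step p t" if "q \<in> B" for q
  proof -
    obtain y j where q: "q = (y, j)" by fastforce
    from B that have "q = p \<or> (i = 0 \<and> a < fst q \<and> fst q < x \<or> i = 1 \<and> x < fst q \<and> fst q < b)"
      by blast
    then have "q = p \<or> (i = 0 \<and> a < y \<and> y < x \<or> i = 1 \<and> x < y \<and> y < b)"
      by (simp only: q fst_conv)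
    then show ?thesis
      by (cases "i = 0"; cases "t < x"; cases "x < t") (auto simp: p q a_def b_def split_step_def)
  qed
  ultimately show ?thesis by blast
qed

lemma continuous_map_split_step: "continuous_map (split_interval n) euclideanreal (\<lambda>p. split_step p t)"
proof (rule continuous_map_split_intervalI)
  fix p V assume "p \<in> split_carrier n" "openin euclideanreal V" "split_step p t \<in> V"
  moreover obtain B where "B \<in> split_nbhds n p" "\<forall>q\<in>B. split_step q t = split_step p t"
    using split_step_locally_constant[OF \<open>p \<in> split_carrier n\<close>] by blast
  ultimately show "\<exists>B\<in>split_nbhds n p. (\<lambda>p. split_step p t) ` B \<subseteq> V"
    by (metis (no_types, lifting) image_subset_iff)
qed simp

lemma split_step_inj:
  assumes "p \<in> split_carrier n" "q \<in> split_carrier n"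
    and "\<And>t. t \<in> {0..1} \<Longrightarrow> split_step p t = split_step q t"
  shows "p = q"
proof -
  have distinct_positions: False if "x < y" "x \<in> {0..1}" "y \<in> {0..1}"
      "\<And>t. t \<in> {0..1} \<Longrightarrow> split_step (x, i) t = split_step (y, j) t" for x y i j
  proof -
    have "(x + y) / 2 \<in> {0..1}" using that(2,3) by auto
    from that(4)[OF this] that(1) show False by (simp add: split_step_def)
  qed
  obtain x i y j where p: "p = (x, i)" and q: "q = (y, j)" by fastforce
  with assms have xy: "x \<in> {0..1}" "y \<in> {0..1}" by auto
  consider "x < y" | "y < x" | "x = y" by linarith
  then show ?thesis
  proof cases
    case 1 with distinct_positions[of x y i j] xy assms(3) show ?thesis by (simp add: p q)
  next
    case 2 with distinct_positions[of y x j i] xy assms(3) show ?thesis by (simp add: p q)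
  next
    case 3
    with assms(3)[of x] xy have "i = j" by (simp add: p q split_step_def)
    with 3 show ?thesis by (simp add: p q)
  qed
qed

definition split_embedding :: "real \<times> nat \<Rightarrow> (nat \<Rightarrow> nat) \<Rightarrow> real" where
  "split_embedding p = (\<lambda>s. split_step p (binary_value s))"

lemma continuous_map_split_embedding: "continuous_map (split_interval n) pointwise_top split_embedding"
  unfolding pointwise_top_def continuous_map_componentwise_UNIV split_embedding_def
  by (simp add: continuous_map_split_step)

lemma inj_on_split_embedding: "inj_on split_embedding (split_carrier n)"
proof (rule inj_onI)
  fix p q assume pq: "p \<in> split_carrier n" "q \<in> split_carrier n" "split_embedding p = split_embedding q"
  show "p = q"
  proof (rule split_step_inj[OF pq(1,2)])
    fix t :: real assume "t \<in> {0..1}"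
    then show "split_step p t = split_step q t"
      using fun_cong[OF pq(3), of "greedy_digits t"]
      by (simp add: split_embedding_def binary_value_greedy_digits)
  qed
qed

lemma rosenthal_compactum_split_interval:
  assumes "n \<ge> 2"
  shows "rosenthal_compactum (split_interval n)"
  unfolding rosenthal_compactum_def
proof (intro exI conjI)
  show "split_embedding ` split_carrier n \<subseteq> baire_one"
    by (auto simp: split_embedding_def split_step_binary_value_baire_one)
  have "compactin (split_interval n) (split_carrier n)"
    using compact_space_split_interval[OF assms] by (simp add: compact_space_def)
  then show "compactin pointwise_top (split_embedding ` split_carrier n)"
    by (rule image_compactin[OF _ continuous_map_split_embedding])
  have "Hausdorff_space pointwise_top"
    by (simp add: pointwise_top_def Hausdorff_space_product_topology)
  then have "embedding_map (split_interval n) pointwise_top split_embedding"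
    using continuous_imp_embedding_map[OF continuous_map_split_embedding
        compact_space_split_interval[OF assms]] inj_on_split_embedding by simp
  then show "split_interval n homeomorphic_space
               subtopology pointwise_top (split_embedding ` split_carrier n)"
    using embedding_map_imp_homeomorphic_space by (metis topspace_split_interval)
qed

theorem mainTheorem6:
  fixes n :: nat
  assumes "n \<ge> 2"
  shows "rosenthal_compactum (split_interval n) \<and>
         premetric_degree_le (split_interval n) n TYPE(real) \<and>
         \<not> premetric_degree_le (split_interval n) (n - 1) TYPE('b)"
  using assms rosenthal_compactum_split_interval premetric_degree_split_interval
    not_premetric_degree_split_interval by simp

end
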